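(* Consider the setting of Proposition 4 and let $\mu(m)$ be the unique solution in $I$ of $G(\mu)=x$ with $x=\nu m/K$, for $m>0$ such that $x$ lies in the interior of $X$; let $p(m)=m/\mu(m)$ and $q(m)=\frac{1-\beta-\mu(m)}{\alpha(1-\sigma(1-\mu(m)))}$. If $\alpha(1-\beta\sigma)>0$, the markup $1/\mu(m)$ is strictly decreasing in $m$; if $\alpha(1-\beta\sigma)<0$, it is strictly increasing in $m$. In all cases $p(m)$ is strictly increasing and $q(m)$ strictly decreasing in $m$. If $\alpha=0$ (with $\beta\in(0,1)$) or $\beta=\frac1\sigma$ (with $\sigma>1$), the markup is constant in $m$ ($p(m)=\frac m{1-\beta}$, resp. $p(m)=\frac{\sigma m}{\sigma-1}$), the price is strictly increasing and the quantity $q(m)$ solving $u'(q)=\nu p(m)$ is strictly decreasing in $m$.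
   Context: Monopolistic competition setting: a firm with marginal cost $m>0$ faces inverse demand $p=u'(q)/\nu$ ($\nu>0$ fixed) with LFRRA utility, $-qu''(q)/u'(q)=\frac{\alpha q+\beta}{\alpha\sigma q+1}$ and $u'(q)=K(1+\alpha\sigma q)^{\beta-\frac1\sigma}q^{-\beta}$, $K>0$; $\mu=m/p$ is the inverse markup. $G$, $I$, $X$ are as follows (with $\Delta=\sqrt{(1-\beta)(1-\beta\sigma)}$): $G(\mu)=\mu[\frac{1-\beta\sigma}{1-\sigma(1-\mu)}]^{\beta-\frac1\sigma}[\frac{1-\beta-\mu}{\alpha(1-\sigma(1-\mu))}]^{-\beta}$ for $\sigma\neq0$ and $G(\mu)=\mu e^{-(1-\beta-\mu)}(\frac{1-\beta-\mu}{\alpha})^{-\beta}$ for $\sigma=0$. Case 1a ($\alpha>0$, $1-\beta\sigma>0$): $\beta\in(0,1)$: $X=(0,\infty)$, $I=(0,1-\beta)$ ($\sigma\le1$) or $(\frac{\sigma-1}\sigma,1-\beta)$ ($\sigma>1$); $\beta=0$: $X=(0,1]$, $I=(0,1]$ ($\sigma\le1$) or $(\frac{\sigma-1}\sigma,1]$ ($\sigma>1$). Case 1b ($\alpha>0$, $1-\beta\sigma<0$): $\beta\in(0,1)$: $X=(0,\infty)$, $I=(1-\beta,\frac{\sigma-1}\sigma)$; $\beta=1$: $X=(0,\alpha(\sigma-1))$, $I=(0,\frac{\sigma-1}\sigma)$. Case 2a ($\alpha<0$, $1-\beta\sigma>0$, $\beta\in(0,1)$): $I=(1-\beta,\bar\mu)$,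 $\bar\mu=\frac{(1-\beta)\sigma+\Delta}{(1-\beta)\sigma+1}$, $X=(\lim_{\mu\to\bar\mu^-}G(\mu),\infty)$. Case 2b ($\alpha<0$, $1-\beta\sigma<0$, $\beta\in(0,1)$): $X=(0,\infty)$, $I=(0,1-\beta)$. In each case $G(\mu)=x$ has a unique solution in $I$ for $x\in X$. *)

theory Defs
  imports "HOL-Analysis.Analysis"
begin

text \<open>Real power with the mathematical convention b^0 = 1 (Isabelle has 0 powr 0 = 0).
  All other uses have strictly positive bases.\<close>
definition rpow :: "real \<Rightarrow> real \<Rightarrow> real" where
  "rpow b e = (if e = 0 then 1 else b powr e)"

definition Gfun :: "real \<Rightarrow> real \<Rightarrow> real \<Rightarrow> real \<Rightarrow> real" where
  "Gfun \<alpha> \<beta> \<sigma> \<mu> =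
     (if \<sigma> \<noteq> 0 then
        \<mu> * rpow ((1 - \<beta> * \<sigma>) / (1 - \<sigma> * (1 - \<mu>))) (\<beta> - 1 / \<sigma>)
          * rpow ((1 - \<beta> - \<mu>) / (\<alpha> * (1 - \<sigma> * (1 - \<mu>)))) (- \<beta>)
      else \<mu> * exp (- (1 - \<beta> - \<mu>)) * rpow ((1 - \<beta> - \<mu>) / \<alpha>) (- \<beta>))"

definition case1a :: "real \<Rightarrow> real \<Rightarrow> real \<Rightarrow> bool" where
  "case1a \<alpha> \<beta> \<sigma> \<longleftrightarrow> \<alpha> > 0 \<and> 1 - \<beta> * \<sigma> > 0 \<and> 0 \<le> \<beta> \<and> \<beta> < 1"

definition case1b :: "real \<Rightarrow> real \<Rightarrow> real \<Rightarrow> bool" where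
  "case1b \<alpha> \<beta> \<sigma> \<longleftrightarrow> \<alpha> > 0 \<and> 1 - \<beta> * \<sigma> < 0 \<and> 0 < \<beta> \<and> \<beta> \<le> 1"

definition case2a :: "real \<Rightarrow> real \<Rightarrow> real \<Rightarrow> bool" where
  "case2a \<alpha> \<beta> \<sigma> \<longleftrightarrow> \<alpha> < 0 \<and> 1 - \<beta> * \<sigma> > 0 \<and> 0 < \<beta> \<and> \<beta> < 1"

definition case2b :: "real \<Rightarrow> real \<Rightarrow> real \<Rightarrow> bool" where
  "case2b \<alpha> \<beta> \<sigma> \<longleftrightarrow> \<alpha> < 0 \<and> 1 - \<beta> * \<sigma> < 0 \<and> 0 < \<beta> \<and> \<beta> < 1"

definition prop4_setting :: "real \<Rightarrow> real \<Rightarrow> real \<Rightarrow> bool" where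
  "prop4_setting \<alpha> \<beta> \<sigma> \<longleftrightarrow>
     case1a \<alpha> \<beta> \<sigma> \<or> case1b \<alpha> \<beta> \<sigma> \<or> case2a \<alpha> \<beta> \<sigma> \<or> case2b \<alpha> \<beta> \<sigma>"

definition mubar :: "real \<Rightarrow> real \<Rightarrow> real" where
  "mubar \<beta> \<sigma> = ((1 - \<beta>) * \<sigma> + sqrt ((1 - \<beta>) * (1 - \<beta> * \<sigma>))) / ((1 - \<beta>) * \<sigma> + 1)"

definition Iset :: "real \<Rightarrow> real \<Rightarrow> real \<Rightarrow> real set" where
  "Iset \<alpha> \<beta> \<sigma> =
     (if case1a \<alpha> \<beta> \<sigma> then
        (if \<beta> > 0 then (if \<sigma> \<le> 1 then {0<..<1 - \<beta>} else {(\<sigma> - 1) / \<sigma><..<1 - \<beta>})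
         else (if \<sigma> \<le> 1 then {0<..1} else {(\<sigma> - 1) / \<sigma><..1}))
      else if case1b \<alpha> \<beta> \<sigma> then
        (if \<beta> < 1 then {1 - \<beta><..<(\<sigma> - 1) / \<sigma>} else {0<..<(\<sigma> - 1) / \<sigma>})
      else if case2a \<alpha> \<beta> \<sigma> then {1 - \<beta><..<mubar \<beta> \<sigma>}
      else if case2b \<alpha> \<beta> \<sigma> then {0<..<1 - \<beta>}
      else {})"

definition Xset :: "real \<Rightarrow> real \<Rightarrow> real \<Rightarrow> real set" where
  "Xset \<alpha> \<beta> \<sigma> =
     (if case1a \<alpha> \<beta> \<sigma> then (if \<beta> > 0 then {0<..} else {0<..1})
      else if case1b \<alpha> \<beta> \<sigma> then (if \<beta> < 1 then {0<..} else {0<..<\<alpha> * (\<sigma> - 1)})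
      else if case2a \<alpha> \<beta> \<sigma> then {Lim (at_left (mubar \<beta> \<sigma>)) (Gfun \<alpha> \<beta> \<sigma>)<..}
      else if case2b \<alpha> \<beta> \<sigma> then {0<..}
      else {})"

definition qfun :: "real \<Rightarrow> real \<Rightarrow> real \<Rightarrow> real \<Rightarrow> real" where
  "qfun \<alpha> \<beta> \<sigma> \<mu> = (1 - \<beta> - \<mu>) / (\<alpha> * (1 - \<sigma> * (1 - \<mu>)))"

text \<open>Marginal utility u'(q) (sigma = 0: limiting form K exp(-alpha q) q^(-beta)).\<close>
definition uprime :: "real \<Rightarrow> real \<Rightarrow> real \<Rightarrow> real \<Rightarrow> real \<Rightarrow> real" where
  "uprime K \<alpha> \<beta> \<sigma> q =
     (if \<sigma> \<noteq> 0 then K * rpow (1 + \<alpha> * \<sigma> * q) (\<beta> - 1 / \<sigma>) * rpow q (- \<beta>)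
      else K * exp (- \<alpha> * q) * rpow q (- \<beta>))"

text \<open>Relative risk aversion r(q) = -q u''(q)/u'(q).\<close>
definition rra :: "real \<Rightarrow> real \<Rightarrow> real \<Rightarrow> real \<Rightarrow> real" where
  "rra \<alpha> \<beta> \<sigma> q = (\<alpha> * q + \<beta>) / (\<alpha> * \<sigma> * q + 1)"

end

theory Submission
  imports Defs
begin

text \<open>
  On Iset, Gfun is positive and its logarithm lnG has derivative
  1/mu + 1/D + beta/(1 - beta - mu) with D = 1 - sigma (1 - mu), the denominator of qfun.
  This derivative has the sign of alpha (1 - beta sigma): in cases 1a and 2b every term is
  easily signed, while in cases 1b and 2a one studies its numerator, a quadratic in t = 1 - mu
  of which 1 - mubar is a root.  Hence the solution mu of Gfun mu = nu m / K moves with m in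
  the direction of alpha (1 - beta sigma).  The price m / mu equals (K / nu) Gfun mu / mu, and
  the logarithm of Gfun mu / mu has derivative 1/D + beta/(1 - beta - mu) > 0 in cases 1a and
  2b, so the price rises with m in all cases.  Finally
  qfun mu2 - qfun mu1 = (mu1 - mu2) (1 - beta sigma) / (alpha D1 D2) with D1 D2 > 0.

  If alpha = 0 or beta sigma = 1, the relative risk aversion is the constant beta and
  u'(q) = K q^(-beta), so the markup is 1/(1 - beta) and q decreases as the price rises.
\<close>

lemma DERIV_ln_quotient:
  fixes f g :: "real \<Rightarrow> real"
  assumes "(f has_real_derivative f') (at x)" "(g has_real_derivative g') (at x)" "f x / g x > 0"
  shows "((\<lambda>x. ln (f x / g x)) has_real_derivative f' / f x - g' / g x) (at x)"
proof -
  have nz: "f x \<noteq> 0" "g x \<noteq> 0" using assms(3) by auto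
  then have "inverse (f x / g x) * ((f' * g x - f x * g') / (g x * g x)) = f' / f x - g' / g x"
    by (simp add: field_simps)
  then show ?thesis
    using DERIV_chain2[OF DERIV_ln[OF assms(3)] DERIV_divide[OF assms(1,2)]] nz by simp
qed

lemma strict_mono_on_if_DERIV_pos:
  fixes f f' :: "real \<Rightarrow> real"
  assumes "is_interval S" "\<And>x. x \<in> S \<Longrightarrow> (f has_real_derivative f' x) (at x)"
    "\<And>x. x \<in> S \<Longrightarrow> 0 < f' x"
  shows "strict_mono_on S f"
proof (rule strict_mono_onI)
  fix a b assume "a \<in> S" "b \<in> S" "a < b"
  show "f a < f b"
  proof (rule DERIV_pos_imp_increasing[OF \<open>a < b\<close>])
    fix x assume "a \<le> x" "x \<le> b"
    then have "x \<in> S" using assms(1) \<open>a \<in> S\<close> \<open>b \<in> S\<close> unfolding is_interval_1 by blast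
    then show "\<exists>y. (f has_real_derivative y) (at x) \<and> 0 < y" using assms(2,3) by blast
  qed
qed

lemma strict_antimono_on_if_DERIV_neg:
  fixes f f' :: "real \<Rightarrow> real"
  assumes "is_interval S" "\<And>x. x \<in> S \<Longrightarrow> (f has_real_derivative f' x) (at x)"
    "\<And>x. x \<in> S \<Longrightarrow> f' x < 0"
  shows "strict_antimono_on S f"
proof -
  have "strict_mono_on S (\<lambda>x. - f x)"
  proof (rule strict_mono_on_if_DERIV_pos[OF assms(1)])
    show "((\<lambda>x. - f x) has_real_derivative - f' x) (at x)" if "x \<in> S" for x
      using assms(2)[OF that] by (rule DERIV_minus)
    show "0 < - f' x" if "x \<in> S" for x using assms(3)[OF that] by simp
  qed
  then show ?thesis unfolding monotone_on_def by simp
qed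

lemma strict_antimono_on_less:
  fixes f :: "'a::linorder \<Rightarrow> 'b::linorder"
  assumes "strict_antimono_on S f" "x \<in> S" "y \<in> S"
  shows "f x < f y \<longleftrightarrow> y < x"
  using assms by (metis linorder_neqE monotone_onD order.asym)

lemma one_less_factor:
  fixes b s :: real
  assumes "0 < b" "b \<le> 1" "1 < b * s"
  shows "1 < s"
proof (rule ccontr)
  assume "\<not> 1 < s"
  then have "b * s \<le> b" using assms(1) by (simp add: mult_left_le)
  then show False using assms by linarith
qed

definition den :: "real \<Rightarrow> real \<Rightarrow> real" where
  "den \<sigma> \<mu> = 1 - \<sigma> * (1 - \<mu>)"

definition ln_mid_factor :: "real \<Rightarrow> real \<Rightarrow> real \<Rightarrow> real" where
  "ln_mid_factor \<beta> \<sigma> \<mu> =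
     (if \<sigma> \<noteq> 0 then (\<beta> - 1 / \<sigma>) * ln ((1 - \<beta> * \<sigma>) / den \<sigma> \<mu>) else \<mu> - (1 - \<beta>))"

definition lnG :: "real \<Rightarrow> real \<Rightarrow> real \<Rightarrow> real \<Rightarrow> real" where
  "lnG \<alpha> \<beta> \<sigma> \<mu> = ln \<mu> + ln_mid_factor \<beta> \<sigma> \<mu> - \<beta> * ln (qfun \<alpha> \<beta> \<sigma> \<mu>)"

definition lnG_deriv :: "real \<Rightarrow> real \<Rightarrow> real \<Rightarrow> real" where
  "lnG_deriv \<beta> \<sigma> \<mu> = 1 / \<mu> + 1 / den \<sigma> \<mu> + \<beta> / (1 - \<beta> - \<mu>)"

lemma qfun_eq: "qfun \<alpha> \<beta> \<sigma> \<mu> = (1 - \<beta> - \<mu>) / (\<alpha> * den \<sigma> \<mu>)"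
  by (simp add: qfun_def den_def)

lemma rpow_eq_exp_ln: "b > 0 \<or> e = 0 \<Longrightarrow> rpow b e = exp (e * ln b)"
  by (auto simp: rpow_def powr_def)

lemma Gfun_eq_exp_lnG:
  assumes "0 < \<mu>" "(1 - \<beta> * \<sigma>) / den \<sigma> \<mu> > 0" "\<beta> \<noteq> 0 \<longrightarrow> qfun \<alpha> \<beta> \<sigma> \<mu> > 0"
  shows "Gfun \<alpha> \<beta> \<sigma> \<mu> = exp (lnG \<alpha> \<beta> \<sigma> \<mu>)"
proof -
  have q: "rpow (qfun \<alpha> \<beta> \<sigma> \<mu>) (- \<beta>) = exp (- \<beta> * ln (qfun \<alpha> \<beta> \<sigma> \<mu>))"
    using assms(3) by (intro rpow_eq_exp_ln) auto
  show ?thesis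
  proof (cases "\<sigma> = 0")
    case True
    then show ?thesis using q assms(1)
      by (simp add: Gfun_def lnG_def ln_mid_factor_def qfun_def exp_add exp_diff exp_minus field_simps)
  next
    case False
    have "rpow ((1 - \<beta> * \<sigma>) / den \<sigma> \<mu>) (\<beta> - 1 / \<sigma>)
        = exp ((\<beta> - 1 / \<sigma>) * ln ((1 - \<beta> * \<sigma>) / den \<sigma> \<mu>))"
      using assms(2) by (intro rpow_eq_exp_ln) auto
    with False q assms(1) show ?thesis
      by (simp add: Gfun_def lnG_def ln_mid_factor_def qfun_def den_def exp_add exp_diff exp_minus
          divide_inverse)
  qed
qed

lemma den_has_derivative: "(den \<sigma> has_real_derivative \<sigma>) (at \<mu>)"
  unfolding den_def[abs_def] by (auto intro!: derivative_eq_intros)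

lemma ln_mid_factor_has_derivative:
  assumes "0 < (1 - \<beta> * \<sigma>) / den \<sigma> \<mu>"
  shows "(ln_mid_factor \<beta> \<sigma> has_real_derivative (1 - \<beta> * \<sigma>) / den \<sigma> \<mu>) (at \<mu>)"
proof (cases "\<sigma> = 0")
  case True
  then show ?thesis
    unfolding ln_mid_factor_def[abs_def] by (auto intro!: derivative_eq_intros simp: den_def)
next
  case False
  have "den \<sigma> \<mu> \<noteq> 0" using assms by auto
  have "((\<lambda>\<mu>. (\<beta> - 1 / \<sigma>) * ln ((1 - \<beta> * \<sigma>) / den \<sigma> \<mu>))
      has_real_derivative (\<beta> - 1 / \<sigma>) * (0 / (1 - \<beta> * \<sigma>) - \<sigma> / den \<sigma> \<mu>)) (at \<mu>)"
    using assms den_has_derivative by (intro DERIV_cmult DERIV_ln_quotient) auto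
  moreover have "(\<beta> - 1 / \<sigma>) * (0 / (1 - \<beta> * \<sigma>) - \<sigma> / den \<sigma> \<mu>) = (1 - \<beta> * \<sigma>) / den \<sigma> \<mu>"
    using False \<open>den \<sigma> \<mu> \<noteq> 0\<close> by (simp add: field_simps)
  ultimately show ?thesis using False unfolding ln_mid_factor_def[abs_def] by simp
qed

lemma ln_qfun_has_derivative:
  assumes "0 < qfun \<alpha> \<beta> \<sigma> \<mu>"
  shows "((\<lambda>\<mu>. ln (qfun \<alpha> \<beta> \<sigma> \<mu>)) has_real_derivative - 1 / (1 - \<beta> - \<mu>) - \<sigma> / den \<sigma> \<mu>) (at \<mu>)"
proof -
  have "\<alpha> \<noteq> 0" using assms by (auto simp: qfun_def)
  have "((\<lambda>\<mu>. ln ((1 - \<beta> - \<mu>) / (\<alpha> * den \<sigma> \<mu>))) has_real_derivative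
      - 1 / (1 - \<beta> - \<mu>) - \<alpha> * \<sigma> / (\<alpha> * den \<sigma> \<mu>)) (at \<mu>)"
    using assms den_has_derivative
    by (intro DERIV_ln_quotient) (auto intro!: derivative_eq_intros simp: qfun_eq)
  then show ?thesis using \<open>\<alpha> \<noteq> 0\<close> by (simp add: qfun_eq)
qed

lemma lnG_has_derivative:
  assumes "0 < \<mu>" "(1 - \<beta> * \<sigma>) / den \<sigma> \<mu> > 0" "\<beta> \<noteq> 0 \<longrightarrow> qfun \<alpha> \<beta> \<sigma> \<mu> > 0"
  shows "(lnG \<alpha> \<beta> \<sigma> has_real_derivative lnG_deriv \<beta> \<sigma> \<mu>) (at \<mu>)"
proof -
  have "((\<lambda>\<mu>. \<beta> * ln (qfun \<alpha> \<beta> \<sigma> \<mu>))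
      has_real_derivative \<beta> * (- 1 / (1 - \<beta> - \<mu>) - \<sigma> / den \<sigma> \<mu>)) (at \<mu>)"
  proof (cases "\<beta> = 0")
    case False
    with assms(3) show ?thesis by (intro DERIV_cmult ln_qfun_has_derivative) simp
  qed simp
  then have "(lnG \<alpha> \<beta> \<sigma> has_real_derivative 1 / \<mu> + (1 - \<beta> * \<sigma>) / den \<sigma> \<mu>
      - \<beta> * (- 1 / (1 - \<beta> - \<mu>) - \<sigma> / den \<sigma> \<mu>)) (at \<mu>)"
    unfolding lnG_def[abs_def] using assms(1,2)
    by (intro DERIV_diff DERIV_add DERIV_ln_divide ln_mid_factor_has_derivative)
  moreover have "1 / \<mu> + (1 - \<beta> * \<sigma>) / den \<sigma> \<mu> - \<beta> * (- 1 / (1 - \<beta> - \<mu>) - \<sigma> / den \<sigma> \<mu>)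
      = lnG_deriv \<beta> \<sigma> \<mu>"
    by (simp add: lnG_deriv_def diff_divide_distrib algebra_simps)
  ultimately show ?thesis by simp
qed

lemma lnG_deriv_eq_quadratic:
  assumes "\<mu> \<noteq> 0" "den \<sigma> \<mu> \<noteq> 0" "1 - \<beta> - \<mu> \<noteq> 0"
  shows "lnG_deriv \<beta> \<sigma> \<mu>
    = (2 * (1 - \<mu>) - ((1 - \<beta>) * \<sigma> + 1) * (1 - \<mu>)\<^sup>2 - \<beta>) / (\<mu> * (1 - \<beta> - \<mu>) * den \<sigma> \<mu>)"
proof -
  have "lnG_deriv \<beta> \<sigma> \<mu> = ((1 - \<beta> - \<mu>) * den \<sigma> \<mu> + \<mu> * (1 - \<beta> - \<mu>) + \<beta> * \<mu> * den \<sigma> \<mu>)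
      / (\<mu> * (1 - \<beta> - \<mu>) * den \<sigma> \<mu>)"
    using assms by (simp add: lnG_deriv_def field_simps)
  also have "(1 - \<beta> - \<mu>) * den \<sigma> \<mu> + \<mu> * (1 - \<beta> - \<mu>) + \<beta> * \<mu> * den \<sigma> \<mu>
      = 2 * (1 - \<mu>) - ((1 - \<beta>) * \<sigma> + 1) * (1 - \<mu>)\<^sup>2 - \<beta>"
    by (simp add: den_def power2_eq_square algebra_simps)
  finally show ?thesis .
qed

lemma qfun_diff:
  assumes "\<alpha> \<noteq> 0" "den \<sigma> x \<noteq> 0" "den \<sigma> y \<noteq> 0"
  shows "qfun \<alpha> \<beta> \<sigma> y - qfun \<alpha> \<beta> \<sigma> x
    = (x - y) * ((1 - \<beta> * \<sigma>) / (\<alpha> * (den \<sigma> x * den \<sigma> y)))"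
proof -
  have "qfun \<alpha> \<beta> \<sigma> y - qfun \<alpha> \<beta> \<sigma> x
      = ((1 - \<beta> - y) * den \<sigma> x - (1 - \<beta> - x) * den \<sigma> y) / (\<alpha> * (den \<sigma> x * den \<sigma> y))"
    using assms by (simp add: qfun_eq field_simps)
  also have "(1 - \<beta> - y) * den \<sigma> x - (1 - \<beta> - x) * den \<sigma> y = (x - y) * (1 - \<beta> * \<sigma>)"
    by (simp add: den_def algebra_simps)
  finally show ?thesis by simp
qed

lemma is_interval_Iset: "is_interval (Iset \<alpha> \<beta> \<sigma>)"
  by (simp add: Iset_def)

lemma Iset_case1a:
  assumes "case1a \<alpha> \<beta> \<sigma>" "\<mu> \<in> Iset \<alpha> \<beta> \<sigma>"
  shows "0 < \<mu>" "\<mu> \<le> 1 - \<beta>" "0 < \<beta> \<Longrightarrow> \<mu> < 1 - \<beta>" "den \<sigma> \<mu> > 0"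
proof -
  have I: "Iset \<alpha> \<beta> \<sigma> = (if \<beta> > 0 then (if \<sigma> \<le> 1 then {0<..<1 - \<beta>} else {(\<sigma> - 1) / \<sigma><..<1 - \<beta>})
         else (if \<sigma> \<le> 1 then {0<..1} else {(\<sigma> - 1) / \<sigma><..1}))"
    using assms(1) by (simp add: Iset_def)
  have \<beta>: "0 \<le> \<beta>" using assms(1) by (simp add: case1a_def)
  have lower: "1 < \<sigma> \<Longrightarrow> (\<sigma> - 1) / \<sigma> < \<mu>" and "\<sigma> \<le> 1 \<Longrightarrow> 0 < \<mu>"
    using assms(2) unfolding I by (simp_all split: if_splits)
  moreover have "1 < \<sigma> \<Longrightarrow> 0 < (\<sigma> - 1) / \<sigma>" by simp
  ultimately show "0 < \<mu>" by (meson less_trans not_less)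
  show "\<mu> \<le> 1 - \<beta>" "0 < \<beta> \<Longrightarrow> \<mu> < 1 - \<beta>"
    using assms(2) \<beta> unfolding I by (simp_all split: if_splits)
  show "den \<sigma> \<mu> > 0"
  proof (cases "1 < \<sigma>")
    case True
    then show ?thesis using lower by (simp add: den_def field_simps)
  next
    case False
    have "\<sigma> * (1 - \<mu>) < 1"
    proof (cases "\<sigma> \<le> 0")
      case True
      moreover have "0 \<le> 1 - \<mu>" using \<open>\<mu> \<le> 1 - \<beta>\<close> \<beta> by simp
      ultimately have "\<sigma> * (1 - \<mu>) \<le> 0" by (rule mult_nonpos_nonneg)
      then show ?thesis by simp
    next
      case False
      then have "\<sigma> * (1 - \<mu>) \<le> 1 - \<mu>"
        using \<open>\<not> 1 < \<sigma>\<close> \<open>\<mu> \<le> 1 - \<beta>\<close> \<beta> by (simp add: mult_left_le_one_le)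
      then show ?thesis using \<open>0 < \<mu>\<close> by linarith
    qed
    then show ?thesis by (simp add: den_def)
  qed
qed

lemma Iset_case1b:
  assumes "case1b \<alpha> \<beta> \<sigma>" "\<mu> \<in> Iset \<alpha> \<beta> \<sigma>"
  shows "0 < \<mu>" "1 - \<beta> < \<mu>" "den \<sigma> \<mu> < 0" "1 < \<sigma>"
proof -
  have \<beta>: "0 < \<beta>" "\<beta> \<le> 1" "1 < \<beta> * \<sigma>" using assms(1) by (auto simp: case1b_def)
  show \<sigma>: "1 < \<sigma>" using \<beta> by (rule one_less_factor)
  have "\<not> case1a \<alpha> \<beta> \<sigma>" using \<beta> by (simp add: case1a_def)
  then have I: "Iset \<alpha> \<beta> \<sigma> = (if \<beta> < 1 then {1 - \<beta><..<(\<sigma> - 1) / \<sigma>} else {0<..<(\<sigma> - 1) / \<sigma>})"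
    using assms(1) by (simp add: Iset_def)
  have lower: "1 - \<beta> < \<mu>" and upper: "\<mu> < (\<sigma> - 1) / \<sigma>"
    using assms(2) \<beta> unfolding I by (simp_all split: if_splits)
  then show "1 - \<beta> < \<mu>" "0 < \<mu>" using \<beta> by linarith+
  show "den \<sigma> \<mu> < 0" using upper \<sigma> by (simp add: den_def field_simps)
qed

lemma Iset_case2b:
  assumes "case2b \<alpha> \<beta> \<sigma>" "\<mu> \<in> Iset \<alpha> \<beta> \<sigma>"
  shows "0 < \<mu>" "\<mu> < 1 - \<beta>" "den \<sigma> \<mu> < 0"
proof -
  have \<beta>: "0 < \<beta>" "\<beta> < 1" "1 < \<beta> * \<sigma>" "\<alpha> < 0" using assms(1) by (auto simp: case2b_def)
  then have "\<not> case1a \<alpha> \<beta> \<sigma>" "\<not> case1b \<alpha> \<beta> \<sigma>" "\<not> case2a \<alpha> \<beta> \<sigma>"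
    by (auto simp: case1a_def case1b_def case2a_def)
  then have "Iset \<alpha> \<beta> \<sigma> = {0<..<1 - \<beta>}" using assms(1) by (simp add: Iset_def)
  then show "0 < \<mu>" "\<mu> < 1 - \<beta>" using assms(2) by simp_all
  have "1 < \<sigma>" using \<beta>(1,2,3) by (rule one_less_factor[OF _ less_imp_le])
  then have "\<sigma> * \<beta> < \<sigma> * (1 - \<mu>)" using \<open>\<mu> < 1 - \<beta>\<close> by simp
  then show "den \<sigma> \<mu> < 0" using \<beta> by (simp add: den_def algebra_simps)
qed

lemma mubar_eq:
  assumes "(1 - \<beta>) * \<sigma> + 1 \<noteq> 0" "0 \<le> (1 - \<beta>) * (1 - \<beta> * \<sigma>)"
  shows "mubar \<beta> \<sigma> = 1 - \<beta> / (1 + sqrt ((1 - \<beta>) * (1 - \<beta> * \<sigma>)))"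
proof -
  define c where "c = (1 - \<beta>) * \<sigma> + 1"
  define \<Delta> where "\<Delta> = sqrt ((1 - \<beta>) * (1 - \<beta> * \<sigma>))"
  have "\<Delta>\<^sup>2 = (1 - \<beta>) * (1 - \<beta> * \<sigma>)" unfolding \<Delta>_def using assms(2) by (rule real_sqrt_pow2)
  also have "\<dots> = 1 - c * \<beta>" by (simp add: c_def algebra_simps)
  finally have "\<Delta>\<^sup>2 = 1 - c * \<beta>" .
  moreover have "0 \<le> \<Delta>" unfolding \<Delta>_def using assms(2) by (rule real_sqrt_ge_zero)
  ultimately have "(c - 1 + \<Delta>) / c = 1 - \<beta> / (1 + \<Delta>)"
    using assms(1) unfolding c_def[symmetric]
    by (simp add: field_simps power2_eq_square)
  then show ?thesis by (simp add: mubar_def c_def \<Delta>_def)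
qed

lemma Iset_case2a:
  assumes "case2a \<alpha> \<beta> \<sigma>" "\<mu> \<in> Iset \<alpha> \<beta> \<sigma>"
  shows "0 < \<mu>" "1 - \<beta> < \<mu>" "den \<sigma> \<mu> > 0"
    "\<beta> / (1 + sqrt ((1 - \<beta>) * (1 - \<beta> * \<sigma>))) < 1 - \<mu>"
proof -
  have \<beta>: "0 < \<beta>" "\<beta> < 1" "\<beta> * \<sigma> < 1" "\<alpha> < 0" using assms(1) by (auto simp: case2a_def)
  then have "\<not> case1a \<alpha> \<beta> \<sigma>" "\<not> case1b \<alpha> \<beta> \<sigma>" by (auto simp: case1a_def case1b_def)
  then have "Iset \<alpha> \<beta> \<sigma> = {1 - \<beta><..<mubar \<beta> \<sigma>}" using assms(1) by (simp add: Iset_def)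
  then have lower: "1 - \<beta> < \<mu>" and upper: "\<mu> < mubar \<beta> \<sigma>" using assms(2) by simp_all
  then show "1 - \<beta> < \<mu>" "0 < \<mu>" using \<beta> by linarith+
  \<comment> \<open>If the denominator of mubar vanishes, then mubar = 0 (as x / 0 = 0) and Iset is empty.\<close>
  have c: "(1 - \<beta>) * \<sigma> + 1 \<noteq> 0"
  proof
    assume "(1 - \<beta>) * \<sigma> + 1 = 0"
    then have "mubar \<beta> \<sigma> = 0" by (simp add: mubar_def)
    then show False using lower upper \<beta> by linarith
  qed
  have "0 \<le> (1 - \<beta>) * (1 - \<beta> * \<sigma>)" using \<beta> by simp
  with upper c show t: "\<beta> / (1 + sqrt ((1 - \<beta>) * (1 - \<beta> * \<sigma>))) < 1 - \<mu>"
    by (simp add: mubar_eq)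
  show "den \<sigma> \<mu> > 0"
  proof (cases "0 \<le> \<sigma>")
    case True
    then have "\<sigma> * (1 - \<mu>) \<le> \<sigma> * \<beta>" using lower by (simp add: mult_left_mono)
    then show ?thesis using \<beta> by (simp add: den_def algebra_simps)
  next
    case False
    have "0 < \<beta> / (1 + sqrt ((1 - \<beta>) * (1 - \<beta> * \<sigma>)))"
      using \<beta> by (simp add: add_pos_nonneg)
    then have "0 < 1 - \<mu>" using t by linarith
    then have "\<sigma> * (1 - \<mu>) < 0" using False by (simp add: mult_neg_pos)
    then show ?thesis by (simp add: den_def)
  qed
qed

lemma prop4_setting_pos_cases:
  assumes "prop4_setting \<alpha> \<beta> \<sigma>" "0 < \<alpha> * (1 - \<beta> * \<sigma>)"
  shows "case1a \<alpha> \<beta> \<sigma> \<or> case2b \<alpha> \<beta> \<sigma>"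
  using assms unfolding prop4_setting_def case1b_def case2a_def
  by (auto simp: zero_less_mult_iff)

lemma prop4_setting_neg_cases:
  assumes "prop4_setting \<alpha> \<beta> \<sigma>" "\<alpha> * (1 - \<beta> * \<sigma>) < 0"
  shows "case1b \<alpha> \<beta> \<sigma> \<or> case2a \<alpha> \<beta> \<sigma>"
  using assms unfolding prop4_setting_def case1a_def case2b_def
  by (auto simp: mult_less_0_iff)

lemma prop4_setting_mult_nonzero:
  assumes "prop4_setting \<alpha> \<beta> \<sigma>"
  shows "\<alpha> * (1 - \<beta> * \<sigma>) \<noteq> 0"
  using assms unfolding prop4_setting_def case1a_def case1b_def case2a_def case2b_def by auto

lemma Iset_admissible:
  assumes "prop4_setting \<alpha> \<beta> \<sigma>" "\<mu> \<in> Iset \<alpha> \<beta> \<sigma>"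
  shows "0 < \<mu>" "0 < (1 - \<beta> * \<sigma>) / den \<sigma> \<mu>" "\<beta> \<noteq> 0 \<longrightarrow> 0 < qfun \<alpha> \<beta> \<sigma> \<mu>"
proof -
  from assms(1) consider (c1a) "case1a \<alpha> \<beta> \<sigma>" | (c1b) "case1b \<alpha> \<beta> \<sigma>"
    | (c2a) "case2a \<alpha> \<beta> \<sigma>" | (c2b) "case2b \<alpha> \<beta> \<sigma>"
    unfolding prop4_setting_def by blast
  then have "0 < \<mu> \<and> 0 < (1 - \<beta> * \<sigma>) / den \<sigma> \<mu> \<and> (\<beta> \<noteq> 0 \<longrightarrow> 0 < qfun \<alpha> \<beta> \<sigma> \<mu>)"
  proof cases
    case c1a
    note \<mu> = Iset_case1a[OF c1a assms(2)]
    have "0 < \<alpha>" "0 < 1 - \<beta> * \<sigma>" "0 \<le> \<beta>" using c1a by (simp_all add: case1a_def)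
    then show ?thesis using \<mu> unfolding qfun_eq by (simp add: divide_pos_pos)
  next
    case c1b
    note \<mu> = Iset_case1b[OF c1b assms(2)]
    have "0 < \<alpha>" "1 - \<beta> * \<sigma> < 0" using c1b by (simp_all add: case1b_def)
    then show ?thesis using \<mu> unfolding qfun_eq by (simp add: divide_neg_neg mult_pos_neg)
  next
    case c2a
    note \<mu> = Iset_case2a[OF c2a assms(2)]
    have "\<alpha> < 0" "0 < 1 - \<beta> * \<sigma>" using c2a by (simp_all add: case2a_def)
    then show ?thesis using \<mu> unfolding qfun_eq by (simp add: divide_pos_pos divide_neg_neg mult_neg_pos)
  next
    case c2b
    note \<mu> = Iset_case2b[OF c2b assms(2)]
    have "\<alpha> < 0" "1 - \<beta> * \<sigma> < 0" using c2b by (simp_all add: case2b_def)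
    then show ?thesis using \<mu> unfolding qfun_eq by (simp add: divide_pos_pos divide_neg_neg mult_neg_neg)
  qed
  then show "0 < \<mu>" "0 < (1 - \<beta> * \<sigma>) / den \<sigma> \<mu>" "\<beta> \<noteq> 0 \<longrightarrow> 0 < qfun \<alpha> \<beta> \<sigma> \<mu>"
    by auto
qed

lemma den_mult_pos_Iset:
  assumes "prop4_setting \<alpha> \<beta> \<sigma>" "x \<in> Iset \<alpha> \<beta> \<sigma>" "y \<in> Iset \<alpha> \<beta> \<sigma>"
  shows "0 < den \<sigma> x * den \<sigma> y"
proof -
  have "0 < (1 - \<beta> * \<sigma>) / den \<sigma> x * ((1 - \<beta> * \<sigma>) / den \<sigma> y)"
    using Iset_admissible(2)[OF assms(1)] assms(2,3) by (intro mult_pos_pos)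
  also have "\<dots> = (1 - \<beta> * \<sigma>)\<^sup>2 / (den \<sigma> x * den \<sigma> y)"
    by (simp add: power2_eq_square)
  finally show ?thesis by (simp add: zero_less_divide_iff)
qed

lemma lnG_deriv_gt_inverse:
  assumes "case1a \<alpha> \<beta> \<sigma> \<or> case2b \<alpha> \<beta> \<sigma>" "\<mu> \<in> Iset \<alpha> \<beta> \<sigma>"
  shows "1 / \<mu> < lnG_deriv \<beta> \<sigma> \<mu>"
proof -
  have "0 < 1 / den \<sigma> \<mu> + \<beta> / (1 - \<beta> - \<mu>)"
    using assms(1)
  proof
    assume c: "case1a \<alpha> \<beta> \<sigma>"
    then have "0 \<le> \<beta>" by (simp add: case1a_def)
    then show ?thesis using Iset_case1a[OF c assms(2)] by (simp add: add_pos_nonneg)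
  next
    assume c: "case2b \<alpha> \<beta> \<sigma>"
    note \<mu> = Iset_case2b[OF c assms(2)]
    have \<beta>: "0 < \<beta>" "1 < \<beta> * \<sigma>" using c by (auto simp: case2b_def)
    have "1 / den \<sigma> \<mu> + \<beta> / (1 - \<beta> - \<mu>) = (1 - \<beta> * \<sigma>) * (1 - \<mu>) / ((1 - \<beta> - \<mu>) * den \<sigma> \<mu>)"
      using \<mu> by (simp add: den_def field_simps)
    also have "0 < \<dots>" using \<mu> \<beta> by (intro divide_neg_neg mult_neg_pos mult_pos_neg) auto
    finally show ?thesis .
  qed
  then show ?thesis by (simp add: lnG_deriv_def)
qed

lemma lnG_deriv_neg_case1b:
  assumes "case1b \<alpha> \<beta> \<sigma>" "\<mu> \<in> Iset \<alpha> \<beta> \<sigma>"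
  shows "lnG_deriv \<beta> \<sigma> \<mu> < 0"
proof -
  note \<mu> = Iset_case1b[OF assms]
  have \<beta>: "0 < \<beta>" "\<beta> \<le> 1" "1 < \<beta> * \<sigma>" using assms(1) by (auto simp: case1b_def)
  define c where "c = (1 - \<beta>) * \<sigma> + 1"
  define t where "t = 1 - \<mu>"
  have "0 < c" using \<beta> \<mu>(4) by (simp add: c_def add_nonneg_pos)
  have N: "2 * t - c * t\<^sup>2 - \<beta> < 0"
  proof (cases "\<beta> = 1")
    case True
    then have "2 * t - c * t\<^sup>2 - \<beta> = - \<mu>\<^sup>2" by (simp add: c_def t_def power2_eq_square algebra_simps)
    then show ?thesis using \<mu>(1) by simp
  next
    case False
    have "c * (2 * t - c * t\<^sup>2 - \<beta>) = (1 - \<beta>) * (1 - \<beta> * \<sigma>) - (c * t - 1)\<^sup>2"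
      by (simp add: c_def power2_eq_square algebra_simps)
    also have "\<dots> < 0" using False \<beta> by (smt (verit) mult_pos_neg zero_le_power2)
    finally show ?thesis using \<open>0 < c\<close> by (simp add: mult_less_0_iff)
  qed
  have "0 < \<mu> * ((1 - \<beta> - \<mu>) * den \<sigma> \<mu>)" using \<mu> by (simp add: mult_neg_neg)
  then show ?thesis
    using N \<mu> by (simp add: lnG_deriv_eq_quadratic c_def t_def divide_neg_pos mult.assoc)
qed

lemma quadratic_pos_between_roots:
  fixes c \<beta> \<Delta> t :: real
  assumes "0 < \<Delta>" "c * \<beta> = 1 - \<Delta>\<^sup>2" "\<beta> / (1 + \<Delta>) < t" "t < \<beta>"
  shows "0 < 2 * t - c * t\<^sup>2 - \<beta>"
proof -
  define t\<^sub>0 where "t\<^sub>0 = \<beta> / (1 + \<Delta>)"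
  have c\<beta>: "c * \<beta> = (1 - \<Delta>) * (1 + \<Delta>)" using assms(2) by (simp add: power2_eq_square algebra_simps)
  then have ct\<^sub>0: "c * t\<^sub>0 = 1 - \<Delta>" using assms(1) by (simp add: t\<^sub>0_def field_simps)
  have factor: "2 * t - c * t\<^sup>2 - \<beta> = (t - t\<^sub>0) * (1 + \<Delta> - c * t)"
  proof -
    have "(t - t\<^sub>0) * (1 + \<Delta> - c * t) = t * (1 + \<Delta>) - c * t\<^sup>2 - t\<^sub>0 * (1 + \<Delta>) + t * (c * t\<^sub>0)"
      by (simp add: power2_eq_square algebra_simps)
    moreover have "t\<^sub>0 * (1 + \<Delta>) = \<beta>" using assms(1) by (simp add: t\<^sub>0_def)
    moreover have "t * (c * t\<^sub>0) = t - t * \<Delta>" "t * (1 + \<Delta>) = t + t * \<Delta>"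
      unfolding ct\<^sub>0 by (simp_all add: algebra_simps)
    ultimately show ?thesis by linarith
  qed
  have "c * t < 1 + \<Delta>"
  proof (cases "0 \<le> c")
    case True
    then have "c * t \<le> c * \<beta>" using assms(4) by (simp add: mult_left_mono)
    then show ?thesis using assms(1,2) by (smt (verit) zero_le_power2)
  next
    case False
    moreover have "t\<^sub>0 < t" using assms(3) by (simp add: t\<^sub>0_def)
    ultimately have "c * t < c * t\<^sub>0" by simp
    then show ?thesis using ct\<^sub>0 assms(1) by simp
  qed
  then show ?thesis unfolding factor using assms(3) by (simp add: t\<^sub>0_def)
qed

lemma lnG_deriv_neg_case2a:
  assumes "case2a \<alpha> \<beta> \<sigma>" "\<mu> \<in> Iset \<alpha> \<beta> \<sigma>"
  shows "lnG_deriv \<beta> \<sigma> \<mu> < 0"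
proof -
  note \<mu> = Iset_case2a[OF assms]
  have \<beta>: "0 < \<beta>" "\<beta> < 1" "\<beta> * \<sigma> < 1" using assms(1) by (auto simp: case2a_def)
  define \<Delta> where "\<Delta> = sqrt ((1 - \<beta>) * (1 - \<beta> * \<sigma>))"
  have "0 < (1 - \<beta>) * (1 - \<beta> * \<sigma>)" using \<beta> by simp
  then have "0 < \<Delta>" "\<Delta>\<^sup>2 = (1 - \<beta>) * (1 - \<beta> * \<sigma>)" by (simp_all add: \<Delta>_def)
  moreover have "((1 - \<beta>) * \<sigma> + 1) * \<beta> = 1 - (1 - \<beta>) * (1 - \<beta> * \<sigma>)"
    by (simp add: algebra_simps)
  ultimately have N: "0 < 2 * (1 - \<mu>) - ((1 - \<beta>) * \<sigma> + 1) * (1 - \<mu>)\<^sup>2 - \<beta>"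
    using \<mu>(4) \<mu>(2) by (intro quadratic_pos_between_roots[of \<Delta>]) (simp_all add: \<Delta>_def)
  have "\<mu> * ((1 - \<beta> - \<mu>) * den \<sigma> \<mu>) < 0" using \<mu> by (simp add: mult_pos_neg mult_neg_pos)
  then show ?thesis
    using N \<mu> by (simp add: lnG_deriv_eq_quadratic divide_pos_neg mult.assoc)
qed

lemma lnG_strict_mono_on_Iset:
  assumes "prop4_setting \<alpha> \<beta> \<sigma>" "0 < \<alpha> * (1 - \<beta> * \<sigma>)"
  shows "strict_mono_on (Iset \<alpha> \<beta> \<sigma>) (lnG \<alpha> \<beta> \<sigma>)"
    and "strict_mono_on (Iset \<alpha> \<beta> \<sigma>) (\<lambda>\<mu>. lnG \<alpha> \<beta> \<sigma> \<mu> - ln \<mu>)"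
proof -
  note gt = lnG_deriv_gt_inverse[OF prop4_setting_pos_cases[OF assms]]
  note adm = Iset_admissible[OF assms(1)]
  have deriv: "(lnG \<alpha> \<beta> \<sigma> has_real_derivative lnG_deriv \<beta> \<sigma> \<mu>) (at \<mu>)"
    if "\<mu> \<in> Iset \<alpha> \<beta> \<sigma>" for \<mu>
    using adm[OF that] by (intro lnG_has_derivative)
  show "strict_mono_on (Iset \<alpha> \<beta> \<sigma>) (lnG \<alpha> \<beta> \<sigma>)"
  proof (rule strict_mono_on_if_DERIV_pos[OF is_interval_Iset deriv])
    show "0 < lnG_deriv \<beta> \<sigma> \<mu>" if "\<mu> \<in> Iset \<alpha> \<beta> \<sigma>" for \<mu>
      using gt[OF that] adm(1)[OF that] by (smt (verit) divide_pos_pos)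
  qed
  show "strict_mono_on (Iset \<alpha> \<beta> \<sigma>) (\<lambda>\<mu>. lnG \<alpha> \<beta> \<sigma> \<mu> - ln \<mu>)"
  proof (rule strict_mono_on_if_DERIV_pos[OF is_interval_Iset])
    show "((\<lambda>\<mu>. lnG \<alpha> \<beta> \<sigma> \<mu> - ln \<mu>) has_real_derivative lnG_deriv \<beta> \<sigma> \<mu> - 1 / \<mu>) (at \<mu>)"
      if "\<mu> \<in> Iset \<alpha> \<beta> \<sigma>" for \<mu>
      using deriv[OF that] adm(1)[OF that] by (intro DERIV_diff DERIV_ln_divide)
    show "0 < lnG_deriv \<beta> \<sigma> \<mu> - 1 / \<mu>" if "\<mu> \<in> Iset \<alpha> \<beta> \<sigma>" for \<mu>
      using gt[OF that] by simp
  qed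
qed

lemma lnG_strict_antimono_on_Iset:
  assumes "prop4_setting \<alpha> \<beta> \<sigma>" "\<alpha> * (1 - \<beta> * \<sigma>) < 0"
  shows "strict_antimono_on (Iset \<alpha> \<beta> \<sigma>) (lnG \<alpha> \<beta> \<sigma>)"
proof (rule strict_antimono_on_if_DERIV_neg[OF is_interval_Iset])
  show "(lnG \<alpha> \<beta> \<sigma> has_real_derivative lnG_deriv \<beta> \<sigma> \<mu>) (at \<mu>)"
    if "\<mu> \<in> Iset \<alpha> \<beta> \<sigma>" for \<mu>
    using Iset_admissible[OF assms(1) that] by (intro lnG_has_derivative)
  show "lnG_deriv \<beta> \<sigma> \<mu> < 0" if "\<mu> \<in> Iset \<alpha> \<beta> \<sigma>" for \<mu>
    using prop4_setting_neg_cases[OF assms] lnG_deriv_neg_case1b lnG_deriv_neg_case2a that by blast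
qed

lemma qfun_strict_antimono_on_Iset:
  assumes "prop4_setting \<alpha> \<beta> \<sigma>" "0 < \<alpha> * (1 - \<beta> * \<sigma>)"
  shows "strict_antimono_on (Iset \<alpha> \<beta> \<sigma>) (qfun \<alpha> \<beta> \<sigma>)"
proof (rule monotone_onI)
  fix x y assume xy: "x \<in> Iset \<alpha> \<beta> \<sigma>" "y \<in> Iset \<alpha> \<beta> \<sigma>" "x < y"
  have P: "0 < den \<sigma> x * den \<sigma> y" using den_mult_pos_Iset[OF assms(1) xy(1,2)] .
  have "0 < b / (a * p)" if "0 < a * b" "0 < p" for a b p :: real
    using that by (metis divide_neg_neg divide_pos_pos mult_neg_pos mult_pos_pos zero_less_mult_iff)
  from this[OF assms(2) P] have c: "0 < (1 - \<beta> * \<sigma>) / (\<alpha> * (den \<sigma> x * den \<sigma> y))" .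
  have "(x - y) * ((1 - \<beta> * \<sigma>) / (\<alpha> * (den \<sigma> x * den \<sigma> y))) < 0"
    using xy(3) by (intro mult_neg_pos c) simp
  moreover have "\<alpha> \<noteq> 0" "den \<sigma> x \<noteq> 0" "den \<sigma> y \<noteq> 0" using assms(2) P by auto
  ultimately show "qfun \<alpha> \<beta> \<sigma> y < qfun \<alpha> \<beta> \<sigma> x"
    using qfun_diff[of \<alpha> \<sigma> x y \<beta>] by linarith
qed

lemma qfun_strict_mono_on_Iset:
  assumes "prop4_setting \<alpha> \<beta> \<sigma>" "\<alpha> * (1 - \<beta> * \<sigma>) < 0"
  shows "strict_mono_on (Iset \<alpha> \<beta> \<sigma>) (qfun \<alpha> \<beta> \<sigma>)"
proof (rule strict_mono_onI)
  fix x y assume xy: "x \<in> Iset \<alpha> \<beta> \<sigma>" "y \<in> Iset \<alpha> \<beta> \<sigma>" "x < y"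
  have P: "0 < den \<sigma> x * den \<sigma> y" using den_mult_pos_Iset[OF assms(1) xy(1,2)] .
  have "b / (a * p) < 0" if "a * b < 0" "0 < p" for a b p :: real
    using that by (metis divide_neg_pos divide_pos_neg mult_neg_pos mult_pos_pos mult_less_0_iff)
  from this[OF assms(2) P] have c: "(1 - \<beta> * \<sigma>) / (\<alpha> * (den \<sigma> x * den \<sigma> y)) < 0" .
  have "0 < (x - y) * ((1 - \<beta> * \<sigma>) / (\<alpha> * (den \<sigma> x * den \<sigma> y)))"
    using xy(3) by (intro mult_neg_neg c) simp
  moreover have "\<alpha> \<noteq> 0" "den \<sigma> x \<noteq> 0" "den \<sigma> y \<noteq> 0" using assms(2) P by auto
  ultimately show "qfun \<alpha> \<beta> \<sigma> x < qfun \<alpha> \<beta> \<sigma> y"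
    using qfun_diff[of \<alpha> \<sigma> x y \<beta>] by linarith
qed

lemma Gfun_Iset_eq_exp_lnG:
  assumes "prop4_setting \<alpha> \<beta> \<sigma>" "\<mu> \<in> Iset \<alpha> \<beta> \<sigma>"
  shows "Gfun \<alpha> \<beta> \<sigma> \<mu> = exp (lnG \<alpha> \<beta> \<sigma> \<mu>)"
  using Iset_admissible[OF assms] by (intro Gfun_eq_exp_lnG)

lemma price_eq_exp_lnG:
  assumes "0 < K" "0 < \<nu>" "prop4_setting \<alpha> \<beta> \<sigma>" "\<mu> \<in> Iset \<alpha> \<beta> \<sigma>"
    and "Gfun \<alpha> \<beta> \<sigma> \<mu> = \<nu> * m / K"
  shows "m / \<mu> = K / \<nu> * exp (lnG \<alpha> \<beta> \<sigma> \<mu> - ln \<mu>)"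
  using assms Gfun_Iset_eq_exp_lnG[OF assms(3,4)] Iset_admissible(1)[OF assms(3,4)]
  by (simp add: exp_diff field_simps)

lemma variable_markup_comparative_statics:
  assumes K: "0 < K" and \<nu>: "0 < \<nu>" and P: "prop4_setting \<alpha> \<beta> \<sigma>" and m: "0 < m1" "m1 < m2"
    and \<mu>1: "\<mu>1 \<in> Iset \<alpha> \<beta> \<sigma>" "Gfun \<alpha> \<beta> \<sigma> \<mu>1 = \<nu> * m1 / K"
    and \<mu>2: "\<mu>2 \<in> Iset \<alpha> \<beta> \<sigma>" "Gfun \<alpha> \<beta> \<sigma> \<mu>2 = \<nu> * m2 / K"
  shows "(0 < \<alpha> * (1 - \<beta> * \<sigma>) \<longrightarrow> 1 / \<mu>2 < 1 / \<mu>1)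
    \<and> (\<alpha> * (1 - \<beta> * \<sigma>) < 0 \<longrightarrow> 1 / \<mu>1 < 1 / \<mu>2)
    \<and> m1 / \<mu>1 < m2 / \<mu>2 \<and> qfun \<alpha> \<beta> \<sigma> \<mu>2 < qfun \<alpha> \<beta> \<sigma> \<mu>1"
proof -
  have pos: "0 < \<mu>1" "0 < \<mu>2" using Iset_admissible(1)[OF P] \<mu>1 \<mu>2 by auto
  have "\<nu> * m1 / K < \<nu> * m2 / K" using K \<nu> m by (simp add: divide_strict_right_mono)
  then have "lnG \<alpha> \<beta> \<sigma> \<mu>1 < lnG \<alpha> \<beta> \<sigma> \<mu>2"
    using Gfun_Iset_eq_exp_lnG[OF P] \<mu>1 \<mu>2 by (metis exp_less_cancel_iff)
  consider "0 < \<alpha> * (1 - \<beta> * \<sigma>)" | "\<alpha> * (1 - \<beta> * \<sigma>) < 0"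
    using prop4_setting_mult_nonzero[OF P] by linarith
  then show ?thesis
  proof cases
    case 1
    note mono = lnG_strict_mono_on_Iset[OF P 1]
    have "\<mu>1 < \<mu>2" using strict_mono_on_less[OF mono(1) \<mu>1(1) \<mu>2(1)] \<open>lnG _ _ _ \<mu>1 < _\<close> by simp
    then have "exp (lnG \<alpha> \<beta> \<sigma> \<mu>1 - ln \<mu>1) < exp (lnG \<alpha> \<beta> \<sigma> \<mu>2 - ln \<mu>2)"
      using strict_mono_on_less[OF mono(2) \<mu>1(1) \<mu>2(1)] by simp
    then have "m1 / \<mu>1 < m2 / \<mu>2"
      unfolding price_eq_exp_lnG[OF K \<nu> P \<mu>1] price_eq_exp_lnG[OF K \<nu> P \<mu>2]
      using K \<nu> by (intro mult_strict_left_mono) simp_all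
    moreover have "qfun \<alpha> \<beta> \<sigma> \<mu>2 < qfun \<alpha> \<beta> \<sigma> \<mu>1"
      using monotone_onD[OF qfun_strict_antimono_on_Iset[OF P 1] \<mu>1(1) \<mu>2(1)] \<open>\<mu>1 < \<mu>2\<close> by simp
    ultimately show ?thesis using 1 pos \<open>\<mu>1 < \<mu>2\<close> by (simp add: frac_less2)
  next
    case 2
    have "\<mu>2 < \<mu>1"
      using strict_antimono_on_less[OF lnG_strict_antimono_on_Iset[OF P 2] \<mu>1(1) \<mu>2(1)]
        \<open>lnG _ _ _ \<mu>1 < _\<close> by simp
    then have "m1 / \<mu>1 < m2 / \<mu>2"
      using m pos by (smt (verit) divide_strict_right_mono frac_less2)
    moreover have "qfun \<alpha> \<beta> \<sigma> \<mu>2 < qfun \<alpha> \<beta> \<sigma> \<mu>1"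
      using strict_mono_onD[OF qfun_strict_mono_on_Iset[OF P 2] \<mu>2(1) \<mu>1(1)] \<open>\<mu>2 < \<mu>1\<close> by simp
    ultimately show ?thesis using 2 pos \<open>\<mu>2 < \<mu>1\<close> by (simp add: frac_less2)
  qed
qed

lemma rra_constant:
  assumes "\<alpha> = 0 \<or> \<beta> * \<sigma> = 1" "\<alpha> * \<sigma> * q + 1 \<noteq> 0"
  shows "rra \<alpha> \<beta> \<sigma> q = \<beta>"
proof -
  have "\<alpha> * q + \<beta> = \<beta> * (\<alpha> * \<sigma> * q + 1)" using assms(1) by (auto simp: algebra_simps)
  then show ?thesis using assms(2) by (simp add: rra_def)
qed

lemma uprime_constant_elasticity:
  assumes "\<alpha> = 0 \<or> \<beta> * \<sigma> = 1" "0 < q"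
  shows "uprime K \<alpha> \<beta> \<sigma> q = K * q powr (- \<beta>)"
proof -
  have "rpow (1 + \<alpha> * \<sigma> * q) (\<beta> - 1 / \<sigma>) = 1" if "\<sigma> \<noteq> 0"
    using assms(1) that by (auto simp: rpow_def field_simps)
  moreover have "\<sigma> = 0 \<Longrightarrow> \<alpha> = 0" using assms(1) by auto
  ultimately show ?thesis using assms(2) by (auto simp: uprime_def rpow_def)
qed

lemma constant_markup_price:
  assumes "\<alpha> = 0 \<or> \<beta> * \<sigma> = 1" "\<beta> \<noteq> 1" "0 < 1 + \<alpha> * \<sigma> * q"
    and "m / (uprime K \<alpha> \<beta> \<sigma> q / \<nu>) = 1 - rra \<alpha> \<beta> \<sigma> q"
  shows "uprime K \<alpha> \<beta> \<sigma> q / \<nu> = m / (1 - \<beta>)"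
proof -
  have "m / (uprime K \<alpha> \<beta> \<sigma> q / \<nu>) = 1 - \<beta>"
    using assms rra_constant[OF assms(1)] by (simp add: add.commute)
  moreover from this have "uprime K \<alpha> \<beta> \<sigma> q / \<nu> \<noteq> 0" using assms(2) by auto
  ultimately show ?thesis using assms(2) by (simp add: field_simps)
qed

lemma constant_elasticity_quantity_less:
  assumes "\<alpha> = 0 \<or> \<beta> * \<sigma> = 1" "0 < \<beta>" "0 < K" "0 < q1" "0 < q2"
    and "uprime K \<alpha> \<beta> \<sigma> q1 < uprime K \<alpha> \<beta> \<sigma> q2"
  shows "q2 < q1"
proof (rule ccontr)
  assume "\<not> q2 < q1"
  then have "q2 powr (- \<beta>) \<le> q1 powr (- \<beta>)" using assms(2,4) by (intro powr_mono2') auto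
  then show False
    using assms uprime_constant_elasticity[OF assms(1)] by (simp add: mult_le_cancel_left_pos)
qed

theorem proposition5:
  fixes \<alpha> \<beta> \<sigma> K \<nu> :: real
  assumes K: "K > 0" and nu: "\<nu> > 0"
  shows
   "(prop4_setting \<alpha> \<beta> \<sigma> \<longrightarrow>
      (\<forall>m1 m2 \<mu>1 \<mu>2. 0 < m1 \<longrightarrow> m1 < m2 \<longrightarrow>
         \<nu> * m1 / K \<in> interior (Xset \<alpha> \<beta> \<sigma>) \<longrightarrow>
         \<nu> * m2 / K \<in> interior (Xset \<alpha> \<beta> \<sigma>) \<longrightarrow>
         \<mu>1 \<in> Iset \<alpha> \<beta> \<sigma> \<longrightarrow> Gfun \<alpha> \<beta> \<sigma> \<mu>1 = \<nu> * m1 / K \<longrightarrow>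
         \<mu>2 \<in> Iset \<alpha> \<beta> \<sigma> \<longrightarrow> Gfun \<alpha> \<beta> \<sigma> \<mu>2 = \<nu> * m2 / K \<longrightarrow>
           (\<alpha> * (1 - \<beta> * \<sigma>) > 0 \<longrightarrow> 1 / \<mu>2 < 1 / \<mu>1) \<and>
           (\<alpha> * (1 - \<beta> * \<sigma>) < 0 \<longrightarrow> 1 / \<mu>1 < 1 / \<mu>2) \<and>
           m1 / \<mu>1 < m2 / \<mu>2 \<and>
           qfun \<alpha> \<beta> \<sigma> \<mu>2 < qfun \<alpha> \<beta> \<sigma> \<mu>1))
    \<and>
    (((\<alpha> = 0 \<and> 0 < \<beta> \<and> \<beta> < 1) \<or> (\<sigma> > 1 \<and> \<beta> = 1 / \<sigma>)) \<longrightarrow>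
      (let pd = (\<lambda>m::real. if \<alpha> = 0 then m / (1 - \<beta>) else \<sigma> * m / (\<sigma> - 1)) in
        (\<forall>m q. 0 < m \<longrightarrow> 0 < q \<longrightarrow> 1 + \<alpha> * \<sigma> * q > 0 \<longrightarrow>
           m / (uprime K \<alpha> \<beta> \<sigma> q / \<nu>) = 1 - rra \<alpha> \<beta> \<sigma> q \<longrightarrow>
           uprime K \<alpha> \<beta> \<sigma> q / \<nu> = pd m) \<and>
        (\<forall>m1 m2. 0 < m1 \<longrightarrow> m1 < m2 \<longrightarrow> pd m1 < pd m2) \<and>
        (\<forall>m1 m2 q1 q2. 0 < m1 \<longrightarrow> m1 < m2 \<longrightarrow>
           0 < q1 \<longrightarrow> 1 + \<alpha> * \<sigma> * q1 > 0 \<longrightarrow> uprime K \<alpha> \<beta> \<sigma> q1 = \<nu> * pd m1 \<longrightarrow>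
           0 < q2 \<longrightarrow> 1 + \<alpha> * \<sigma> * q2 > 0 \<longrightarrow> uprime K \<alpha> \<beta> \<sigma> q2 = \<nu> * pd m2 \<longrightarrow>
           q2 < q1)))"
proof (intro conjI impI, goal_cases)
  case 1
  then show ?case using variable_markup_comparative_statics[OF K nu] by blast
next
  case 2
  then have ce: "\<alpha> = 0 \<or> \<beta> * \<sigma> = 1" and \<beta>: "0 < \<beta>" "\<beta> < 1" by auto
  have pd_eq: "(if \<alpha> = 0 then m / (1 - \<beta>) else \<sigma> * m / (\<sigma> - 1)) = m / (1 - \<beta>)" for m
    using 2 by (auto simp: field_simps)
  have price_mono: "\<nu> * (m1 / (1 - \<beta>)) < \<nu> * (m2 / (1 - \<beta>))" if "m1 < m2" for m1 m2
    using that \<beta> nu by (simp add: divide_strict_right_mono)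
  show ?case unfolding Let_def pd_eq
    using constant_markup_price[OF ce] constant_elasticity_quantity_less[OF ce \<beta>(1) K] price_mono \<beta>
    by (auto simp: divide_strict_right_mono)
qed

end
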